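(* Let $T=(\vec G,G,\prec,A)$ be a twisted graph, simplicial on $F$, with edge set $E=F\sqcup\{x_1,x_2,x_3\}$ where $x_1\prec x_2\prec x_3$, and let $C$ be either $(\{x_1,x_3\},\{x_2\})$ or its opposite $(\{x_2\},\{x_1,x_3\})$. Fix orderings of the rows and columns of $\Sigma(T)$. Then there is a sign $\sigma_C\in\{1,-1\}$ such that, for every $\boldsymbol\theta$ respecting $\prec$, the system of strict inequalities $\widehat a\cdot\mathbf r>0$ ($a\in A$) together with $\widehat C\cdot\mathbf r>0$, in the unknown $\mathbf r\in\mathbb{R}^E$, is soluble if and only if the sign of the determinant of the square submatrix of $\Sigma(T)$ on the columns $F\cup\{x_1\}$ equals $\sigma_C$. Moreover $\sigma_{-C}=-\sigma_C$.
   Context: Signed sets on a finite set $E$: pairs $X=(X^+,X^-)$ of disjoint subsets, $X(e)=+1,-1,0$ according as $e\in X^+$, $e\in X^-$, or neither; support $\underline X=X^+\cup X^-$; $-X=(X^-,X^+)$. Conformal: no $e$ with $X(e)=-Y(e)\ne0$; composition $(X\circ Y)(e)=X(e)$ if $X(e)\ne0$, else $Y(e)$. For a total order $<$ on $E$, $\mathcal C(<)=\{(\{e_1,e_3\},\{e_2\}),(\{e_2\},\{e_1,e_3\}):e_1<e_2<e_3\}$ (circuits of the rank 2 oriented matroid $\mathcal M(<)$; vectors are compositions of pairwise conformal families of circuits); for a partial order $\prec$, $\mathcal C(\prec)=\bigcap_{<\supseteq\prec}\mathcal C(<)$. For a directed graph $\vec G=(V,\vec E)$ (no loops, parallel or antiparallel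 edges), underlying simple graph $G=(V,E)$, a strong map $\mathcal M^*(\vec G)\to\mathcal M(<)$ means every signed minimal cut $(\{(u,w):u\in S,w\notin S\},\{(u,w):w\in S,u\notin S\})$ ($S$, $V\setminus S$ inducing connected subgraphs) is a vector of $\mathcal M(<)$; $C^*_v=(\{(u,v)\in\vec E\},\{(v,u)\in\vec E\})$. A twisted graph $T=(\vec G,G,\prec,A)$: $\prec$ a partial order on $E$, $G$ three-edge-connected, $A\subset\mathcal C(\prec)$, a strong map $\mathcal M^*(\vec G)\to\mathcal M(<)$ for every total $<\supseteq\prec$, and a partition $A=\bigsqcup_v A_v$ with members of $A_v$ pairwise conformal and composing to $C^*_v$. $\boldsymbol\theta\in\mathbb{R}^E$ respects $\prec$ if $0<\theta_e<180$ (degrees) and $\theta_e<\theta_f$ whenever $e\prec f$. For a signed set $c$ with $|\underline c|=3$ whose support elements needed below are $\prec$-comparable, $\widehat c\in\mathbb{R}^E$ has $\widehat c(e)=0$ for $e\notin\underline c$ and $\widehat c(e)=c(e)\sin(\theta_{e''}-\theta_{e'})$ if $\underline c=\{e,e',e''\}$ with $e'\prec e''$; $\Sigma(T)$ is the $|A|\times|E|$ matrix with rows $\widehat a$, $a\in A$. A matrix with $r+1$ rows and $r$ columns is a simplex if its rows have a linear dependency with all coefficients positive and every row dependency is a multiple of it. $T$ is simplicial on $F$ if for every $\boldsymbol\theta$ respecting $\prec$ the submatrix of $\Sigma(T)$ on columns $F$ is a simplex (so $|F|=|A|-1$ and the submatrix on $F\cup\{x_1\}$ is square). *)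

theory Defs
  imports Complex_Main "Jordan_Normal_Form.Determinant"
begin

type_synonym 'e sset = "'e set \<times> 'e set"

definition sval :: "'e sset \<Rightarrow> 'e \<Rightarrow> real" where
  "sval X e = (if e \<in> fst X then 1 else if e \<in> snd X then -1 else 0)"

definition supp :: "'e sset \<Rightarrow> 'e set" where
  "supp X = fst X \<union> snd X"

definition sneg :: "'e sset \<Rightarrow> 'e sset" where
  "sneg X = (snd X, fst X)"

definition conformal :: "'e sset \<Rightarrow> 'e sset \<Rightarrow> bool" where
  "conformal X Y \<longleftrightarrow> \<not> (\<exists>e. sval X e = - sval Y e \<and> sval X e \<noteq> 0)"

definition scomp :: "'e sset \<Rightarrow> 'e sset \<Rightarrow> 'e sset" where
  "scomp X Y = ({e. sval X e = 1 \<or> (sval X e = 0 \<and> sval Y e = 1)},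
                {e. sval X e = -1 \<or> (sval X e = 0 \<and> sval Y e = -1)})"

definition composes_to :: "'e sset set \<Rightarrow> 'e sset \<Rightarrow> bool" where
  "composes_to S X \<longleftrightarrow> (\<exists>l. distinct l \<and> set l = S \<and> foldr scomp l ({}, {}) = X)"

definition strict_partial_order_on :: "'e set \<Rightarrow> ('e \<Rightarrow> 'e \<Rightarrow> bool) \<Rightarrow> bool" where
  "strict_partial_order_on E r \<longleftrightarrow>
     (\<forall>e\<in>E. \<not> r e e) \<and> (\<forall>e\<in>E. \<forall>f\<in>E. \<forall>g\<in>E. r e f \<longrightarrow> r f g \<longrightarrow> r e g)"

definition strict_total_order_on :: "'e set \<Rightarrow> ('e \<Rightarrow> 'e \<Rightarrow> bool) \<Rightarrow> bool" where
  "strict_total_order_on E r \<longleftrightarrow> strict_partial_order_on E r \<and>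
     (\<forall>e\<in>E. \<forall>f\<in>E. e \<noteq> f \<longrightarrow> r e f \<or> r f e)"

definition total_ext :: "'e set \<Rightarrow> ('e \<Rightarrow> 'e \<Rightarrow> bool) \<Rightarrow> ('e \<Rightarrow> 'e \<Rightarrow> bool) \<Rightarrow> bool" where
  "total_ext E prec lt \<longleftrightarrow> strict_total_order_on E lt \<and>
     (\<forall>e\<in>E. \<forall>f\<in>E. prec e f \<longrightarrow> lt e f)"

definition circuits_tot :: "'e set \<Rightarrow> ('e \<Rightarrow> 'e \<Rightarrow> bool) \<Rightarrow> 'e sset set" where
  "circuits_tot E lt = {c. \<exists>e1\<in>E. \<exists>e2\<in>E. \<exists>e3\<in>E. lt e1 e2 \<and> lt e2 e3 \<and>
       (c = ({e1, e3}, {e2}) \<or> c = ({e2}, {e1, e3}))}"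

definition circuits_po :: "'e set \<Rightarrow> ('e \<Rightarrow> 'e \<Rightarrow> bool) \<Rightarrow> 'e sset set" where
  "circuits_po E prec = {c. \<forall>lt. total_ext E prec lt \<longrightarrow> c \<in> circuits_tot E lt}"

definition is_vector :: "'e set \<Rightarrow> ('e \<Rightarrow> 'e \<Rightarrow> bool) \<Rightarrow> 'e sset \<Rightarrow> bool" where
  "is_vector E lt X \<longleftrightarrow> (\<exists>S. finite S \<and> S \<subseteq> circuits_tot E lt \<and>
       (\<forall>c\<in>S. \<forall>d\<in>S. conformal c d) \<and> composes_to S X)"

text \<open>Directed graph (V, Ed): no loops, no parallel or antiparallel edges. Its edge set
  Ed is also the edge set E of the underlying simple graph G.\<close>
definition digraph :: "'v set \<Rightarrow> ('v \<times> 'v) set \<Rightarrow> bool" where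
  "digraph V Ed \<longleftrightarrow> finite V \<and> Ed \<subseteq> V \<times> V \<and> (\<forall>v. (v, v) \<notin> Ed) \<and>
     (\<forall>u w. (u, w) \<in> Ed \<longrightarrow> (w, u) \<notin> Ed)"

definition induced_connected :: "('v \<times> 'v) set \<Rightarrow> 'v set \<Rightarrow> bool" where
  "induced_connected Ed S \<longleftrightarrow> S \<noteq> {} \<and>
     (\<forall>u\<in>S. \<forall>w\<in>S. (u, w) \<in> ({(x, y). x \<in> S \<and> y \<in> S \<and> ((x, y) \<in> Ed \<or> (y, x) \<in> Ed)})\<^sup>*)"

definition three_edge_connected :: "'v set \<Rightarrow> ('v \<times> 'v) set \<Rightarrow> bool" where
  "three_edge_connected V Ed \<longleftrightarrow> card V \<ge> 2 \<and>
     (\<forall>X. X \<subseteq> Ed \<longrightarrow> card X < 3 \<longrightarrow> induced_connected (Ed - X) V)"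

definition signed_cut :: "('v \<times> 'v) set \<Rightarrow> 'v set \<Rightarrow> ('v \<times> 'v) sset" where
  "signed_cut Ed S = ({(u, w). (u, w) \<in> Ed \<and> u \<in> S \<and> w \<notin> S},
                      {(u, w). (u, w) \<in> Ed \<and> w \<in> S \<and> u \<notin> S})"

definition vertex_cocircuit :: "('v \<times> 'v) set \<Rightarrow> 'v \<Rightarrow> ('v \<times> 'v) sset" where
  "vertex_cocircuit Ed v = ({(u, w). (u, w) \<in> Ed \<and> w = v}, {(u, w). (u, w) \<in> Ed \<and> u = v})"

text \<open>Strong map M*(G) -> M(<): every signed minimal cut is a vector of M(<).\<close>
definition strong_map :: "'v set \<Rightarrow> ('v \<times> 'v) set \<Rightarrow> (('v \<times> 'v) \<Rightarrow> ('v \<times> 'v) \<Rightarrow> bool) \<Rightarrow> bool" where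
  "strong_map V Ed lt \<longleftrightarrow> (\<forall>S. S \<subseteq> V \<longrightarrow> induced_connected Ed S \<longrightarrow>
       induced_connected Ed (V - S) \<longrightarrow> is_vector Ed lt (signed_cut Ed S))"

definition twisted_graph ::
  "'v set \<Rightarrow> ('v \<times> 'v) set \<Rightarrow> (('v \<times> 'v) \<Rightarrow> ('v \<times> 'v) \<Rightarrow> bool) \<Rightarrow> ('v \<times> 'v) sset set \<Rightarrow> bool" where
  "twisted_graph V Ed prec A \<longleftrightarrow>
     digraph V Ed \<and> strict_partial_order_on Ed prec \<and> three_edge_connected V Ed \<and>
     A \<subseteq> circuits_po Ed prec \<and>
     (\<forall>lt. total_ext Ed prec lt \<longrightarrow> strong_map V Ed lt) \<and>
     (\<exists>part :: ('v \<times> 'v) sset \<Rightarrow> 'v. (\<forall>a\<in>A. part a \<in> V) \<and>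
        (\<forall>v\<in>V. (\<forall>a\<in>A. \<forall>b\<in>A. part a = v \<longrightarrow> part b = v \<longrightarrow> conformal a b) \<and>
                 composes_to {a\<in>A. part a = v} (vertex_cocircuit Ed v)))"

definition respects_po :: "'e set \<Rightarrow> ('e \<Rightarrow> 'e \<Rightarrow> bool) \<Rightarrow> ('e \<Rightarrow> real) \<Rightarrow> bool" where
  "respects_po E prec \<theta> \<longleftrightarrow> (\<forall>e\<in>E. 0 < \<theta> e \<and> \<theta> e < 180) \<and>
     (\<forall>e\<in>E. \<forall>f\<in>E. prec e f \<longrightarrow> \<theta> e < \<theta> f)"

definition sin_deg :: "real \<Rightarrow> real" where
  "sin_deg x = sin (x * pi / 180)"

definition shat :: "('e \<Rightarrow> 'e \<Rightarrow> bool) \<Rightarrow> ('e \<Rightarrow> real) \<Rightarrow> 'e sset \<Rightarrow> 'e \<Rightarrow> real" where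
  "shat prec \<theta> c e = (if e \<in> supp c then
      sval c e * (THE s. \<exists>e' e''. supp c = {e, e', e''} \<and> e' \<noteq> e \<and> e'' \<noteq> e \<and> prec e' e'' \<and>
                                 s = sin_deg (\<theta> e'' - \<theta> e'))
    else 0)"

definition dotE :: "'e set \<Rightarrow> ('e \<Rightarrow> real) \<Rightarrow> ('e \<Rightarrow> real) \<Rightarrow> real" where
  "dotE E u r = (\<Sum>e\<in>E. u e * r e)"

definition is_simplex :: "'r set \<Rightarrow> 'c set \<Rightarrow> ('r \<Rightarrow> 'c \<Rightarrow> real) \<Rightarrow> bool" where
  "is_simplex R K M \<longleftrightarrow> finite R \<and> finite K \<and> card R = card K + 1 \<and>
     (\<exists>lam. (\<forall>a\<in>R. lam a > 0) \<and> (\<forall>k\<in>K. (\<Sum>a\<in>R. lam a * M a k) = 0) \<and>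
          (\<forall>\<mu>. (\<forall>k\<in>K. (\<Sum>a\<in>R. \<mu> a * M a k) = 0) \<longrightarrow> (\<exists>t. \<forall>a\<in>R. \<mu> a = t * lam a)))"

definition simplicial_on ::
  "'e set \<Rightarrow> ('e \<Rightarrow> 'e \<Rightarrow> bool) \<Rightarrow> 'e sset set \<Rightarrow> 'e set \<Rightarrow> bool" where
  "simplicial_on E prec A F \<longleftrightarrow>
     (\<forall>\<theta>. respects_po E prec \<theta> \<longrightarrow> is_simplex A F (\<lambda>a e. shat prec \<theta> a e))"

definition sigma_sub ::
  "('e \<Rightarrow> 'e \<Rightarrow> bool) \<Rightarrow> ('e \<Rightarrow> real) \<Rightarrow> 'e sset list \<Rightarrow> 'e list \<Rightarrow> 'e set \<Rightarrow> real mat" where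
  "sigma_sub prec \<theta> rs cs K =
     (let ks = filter (\<lambda>e. e \<in> K) cs in
      mat (length rs) (length ks) (\<lambda>(i, j). shat prec \<theta> (rs ! i) (ks ! j)))"

end

theory Submission
  imports Defs
begin

text \<open>Every row \<open>\<widehat>a\<close> of \<open>\<Sigma>(T)\<close>, and \<open>\<widehat>C\<close> as well, is orthogonal to the vectors
  \<open>(cos \<theta>\<^sub>e)\<^sub>e\<close> and \<open>(sin \<theta>\<^sub>e)\<^sub>e\<close>: this is the sine subtraction formula. If \<open>\<lambda> > 0\<close>
  is the dependency of the rows on the columns \<open>F\<close>, then \<open>w = \<Sum> \<lambda>\<^sub>a \<widehat>a\<close> vanishes on \<open>F\<close> and
  lies in the same two-dimensional orthogonal complement, so it is the multiple
  \<open>w(x\<^sub>1) / \<widehat>C(x\<^sub>1) \<cdot> \<widehat>C\<close> of \<open>\<widehat>C\<close>. A Gordan-type argument then shows that the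
  system is soluble iff \<open>w(x\<^sub>1)\<close> has the sign of \<open>\<widehat>C(x\<^sub>1)\<close>. On the other hand, the
  cofactors of the column \<open>x\<^sub>1\<close> of the square submatrix \<open>M\<close> on \<open>F \<union> {x\<^sub>1}\<close> are
  proportional to \<open>\<lambda>\<close>, so \<open>det M = \<plusminus>m \<cdot> w(x\<^sub>1) / \<lambda>\<^sub>1\<close>, where \<open>m\<close> is the minor
  obtained by deleting the first row and the column \<open>x\<^sub>1\<close>. Uniqueness of \<open>\<lambda>\<close> makes \<open>m\<close>
  nonzero for every admissible \<open>\<theta>\<close>, and since these \<open>\<theta>\<close> form a convex set, the sign of
  \<open>m\<close> does not depend on \<open>\<theta>\<close>; it determines \<open>\<sigma>\<^sub>C\<close>.\<close>

section \<open>Square matrices with a unique positive row dependency\<close>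

lemma cofactor_column_orthogonal:
  fixes M :: "'a :: comm_ring_1 mat"
  assumes M: "M \<in> carrier_mat n n" and jk: "j < n" "k < n" "k \<noteq> j"
  shows "(\<Sum>i<n. cofactor M i j * M $$ (i, k)) = 0"
proof -
  have "(\<Sum>i<n. cofactor M i j * M $$ (i, k)) = (adj_mat M * M) $$ (j, k)"
    using M jk by (auto simp: adj_mat_def scalar_prod_def atLeast0LessThan intro!: sum.cong)
  also have "\<dots> = 0"
    using adj_mat(3)[OF M] jk by simp
  finally show ?thesis .
qed

lemma ex_solution_if_det_nonzero:
  fixes M :: "'a :: field mat"
  assumes M: "M \<in> carrier_mat n n" and det: "det M \<noteq> 0"
  shows "\<exists>v. \<forall>i<n. (\<Sum>k<n. M $$ (i, k) * v k) = b i"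
proof -
  define v where "v = (1 / det M) \<cdot>\<^sub>v (adj_mat M *\<^sub>v vec n b)"
  have "M *\<^sub>v v = (1 / det M) \<cdot>\<^sub>v ((M * adj_mat M) *\<^sub>v vec n b)"
    using M adj_mat(1)[OF M] unfolding v_def
    by (simp add: mult_mat_vec)
  also have "\<dots> = vec n b"
  proof -
    have "(det M \<cdot>\<^sub>m 1\<^sub>m n) *\<^sub>v vec n b = det M \<cdot>\<^sub>v (1\<^sub>m n *\<^sub>v vec n b)"
      by auto
    then show ?thesis
      using det unfolding adj_mat(2)[OF M] by (simp add: smult_smult_assoc)
  qed
  finally have Mv: "M *\<^sub>v v = vec n b" .
  have v: "v \<in> carrier_vec n"
    using M adj_mat(1)[OF M] unfolding v_def by simp
  have "(\<Sum>k<n. M $$ (i, k) * v $ k) = (M *\<^sub>v v) $ i" if "i < n" for i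
    using M v that by (auto simp: scalar_prod_def atLeast0LessThan)
  then show ?thesis
    using Mv by (intro exI[of _ "\<lambda>k. v $ k"]) simp
qed

definition simplex_dependency ::
  "'r set \<Rightarrow> 'c set \<Rightarrow> ('r \<Rightarrow> 'c \<Rightarrow> real) \<Rightarrow> ('r \<Rightarrow> real) \<Rightarrow> bool" where
  "simplex_dependency R K M lam \<longleftrightarrow>
     (\<forall>a\<in>R. lam a > 0) \<and> (\<forall>k\<in>K. (\<Sum>a\<in>R. lam a * M a k) = 0) \<and>
     (\<forall>\<mu>. (\<forall>k\<in>K. (\<Sum>a\<in>R. \<mu> a * M a k) = 0) \<longrightarrow> (\<exists>t. \<forall>a\<in>R. \<mu> a = t * lam a))"

lemma is_simplex_iff_dependency:
  "is_simplex R K M \<longleftrightarrow>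
     finite R \<and> finite K \<and> card R = card K + 1 \<and> (\<exists>lam. simplex_dependency R K M lam)"
  unfolding is_simplex_def simplex_dependency_def by blast

lemma simplex_dependencyD:
  assumes "simplex_dependency R K M lam"
  shows "\<And>a. a \<in> R \<Longrightarrow> lam a > 0"
    and "\<And>k. k \<in> K \<Longrightarrow> (\<Sum>a\<in>R. lam a * M a k) = 0"
    and "\<forall>k\<in>K. (\<Sum>a\<in>R. \<mu> a * M a k) = 0 \<Longrightarrow> \<exists>t. \<forall>a\<in>R. \<mu> a = t * lam a"
  using assms unfolding simplex_dependency_def by blast+

lemma simplex_dependency_reindex:
  assumes f: "bij_betw f R' R" and g: "bij_betw g K' K"
    and M': "\<And>i k. i \<in> R' \<Longrightarrow> k \<in> K' \<Longrightarrow> M' i k = M (f i) (g k)"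
    and dep: "simplex_dependency R K M lam"
  shows "simplex_dependency R' K' M' (lam \<circ> f)"
proof -
  have sum_R: "(\<Sum>a\<in>R. h a) = (\<Sum>i\<in>R'. h (f i))" for h :: "_ \<Rightarrow> real"
    by (simp add: sum.reindex_bij_betw[OF f])
  have fR: "f i \<in> R" if "i \<in> R'" for i
    using f that by (auto dest: bij_betw_apply)
  have gK: "\<exists>k'\<in>K'. k = g k'" if "k \<in> K" for k
    using g that by (auto simp: bij_betw_def)
  have comb: "(\<Sum>i\<in>R'. \<mu> (f i) * M' i k) = (\<Sum>a\<in>R. \<mu> a * M a (g k))" if "k \<in> K'" for \<mu> k
    using M' that by (simp add: sum_R)
  show ?thesis
    unfolding simplex_dependency_def
  proof (intro conjI allI impI ballI)
    show "(lam \<circ> f) i > 0" if "i \<in> R'" for i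
      using simplex_dependencyD(1)[OF dep fR[OF that]] by simp
    show "(\<Sum>i\<in>R'. (lam \<circ> f) i * M' i k) = 0" if "k \<in> K'" for k
      using comb[OF that, of lam] simplex_dependencyD(2)[OF dep] bij_betw_apply[OF g that] by simp
  next
    fix \<mu>' assume \<mu>': "\<forall>k\<in>K'. (\<Sum>i\<in>R'. \<mu>' i * M' i k) = 0"
    define \<mu> where "\<mu> = \<mu>' \<circ> inv_into R' f"
    have \<mu>f: "\<mu> (f i) = \<mu>' i" if "i \<in> R'" for i
      using f that by (simp add: \<mu>_def bij_betw_inv_into_left)
    have "\<forall>k\<in>K. (\<Sum>a\<in>R. \<mu> a * M a k) = 0"
    proof
      fix k assume "k \<in> K"
      then obtain k' where k': "k' \<in> K'" "k = g k'" using gK by blast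
      have "(\<Sum>a\<in>R. \<mu> a * M a k) = (\<Sum>i\<in>R'. \<mu>' i * M' i k')"
        using comb[OF k'(1), of \<mu>] \<mu>f k' by (simp cong: sum.cong)
      then show "(\<Sum>a\<in>R. \<mu> a * M a k) = 0" using \<mu>' k' by simp
    qed
    then obtain t where "\<forall>a\<in>R. \<mu> a = t * lam a"
      using simplex_dependencyD(3)[OF dep] by blast
    then show "\<exists>t. \<forall>i\<in>R'. \<mu>' i = t * (lam \<circ> f) i"
      using \<mu>f fR by (metis comp_apply)
  qed
qed

text \<open>A left kernel vector of the minor, padded with \<open>0\<close> in row \<open>0\<close>, would be a dependency
  vanishing where \<open>lam\<close> is positive.\<close>
lemma det_delete_first_row_nonzero:
  fixes M :: "real mat"
  assumes M: "M \<in> carrier_mat n n" and j: "j < n"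
    and dep: "simplex_dependency {..<n} ({..<n} - {j}) (\<lambda>i k. M $$ (i, k)) lam"
  shows "det (mat_delete M 0 j) \<noteq> 0"
proof
  obtain m where n: "n = Suc m" using j by (cases n) auto
  define D where "D = mat_delete M 0 j"
  have D: "D \<in> carrier_mat m m"
    using mat_delete_carrier[OF M] unfolding D_def n by simp
  assume "det D = 0"
  then have "det D\<^sup>T = 0"
    using det_transpose[OF D] by simp
  then obtain v where v: "v \<in> carrier_vec m" "v \<noteq> 0\<^sub>v m" "D\<^sup>T *\<^sub>v v = 0\<^sub>v m"
    using det_0_iff_vec_prod_zero_field[of "D\<^sup>T" m] D by auto
  define \<mu> where "\<mu> i = (if i = 0 then 0 else v $ (i - 1))" for i
  have "\<forall>k\<in>{..<n} - {j}. (\<Sum>i<n. \<mu> i * M $$ (i, k)) = 0"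
  proof
    fix k assume k: "k \<in> {..<n} - {j}"
    define k' where "k' = (if k < j then k else k - 1)"
    have k': "k' < m" "(if k' < j then k' else Suc k') = k"
      using k j unfolding k'_def n by auto
    have "(\<Sum>i<n. \<mu> i * M $$ (i, k)) = (\<Sum>i<m. v $ i * M $$ (Suc i, k))"
      unfolding n by (subst sum.lessThan_Suc_shift) (simp add: \<mu>_def)
    also have "\<dots> = (D\<^sup>T *\<^sub>v v) $ k'"
      using k' D v(1) M unfolding D_def n
      by (auto simp: scalar_prod_def mat_delete_def atLeast0LessThan mult.commute
          intro!: sum.cong)
    finally show "(\<Sum>i<n. \<mu> i * M $$ (i, k)) = 0"
      using v(3) k' by simp
  qed
  then have "\<exists>t. \<forall>i\<in>{..<n}. \<mu> i = t * lam i"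
    by (rule simplex_dependencyD(3)[OF dep])
  then obtain t where t: "\<forall>i<n. \<mu> i = t * lam i"
    by auto
  have "lam 0 > 0"
    using simplex_dependencyD(1)[OF dep] unfolding n by simp
  then have "t = 0"
    using t[rule_format, of 0] unfolding n by (simp add: \<mu>_def)
  then have "v = 0\<^sub>v m"
    using t v(1) unfolding n by (intro eq_vecI) (auto simp: \<mu>_def dest: spec[of _ "Suc _"])
  then show False
    using v(2) by simp
qed

text \<open>The cofactors along column j form a row dependency on the other columns, so they are
  proportional to lam; Laplace expansion along column j then gives the formula.\<close>
lemma det_eq_minor_times_dependency:
  fixes M :: "real mat"
  assumes M: "M \<in> carrier_mat n n" and j: "j < n"
    and dep: "simplex_dependency {..<n} ({..<n} - {j}) (\<lambda>i k. M $$ (i, k)) lam"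
  shows "det M = (-1) ^ j * det (mat_delete M 0 j) * (\<Sum>i<n. lam i * M $$ (i, j)) / lam 0"
proof -
  have pos: "lam 0 > 0"
    using simplex_dependencyD(1)[OF dep] j by simp
  have "\<forall>k\<in>{..<n} - {j}. (\<Sum>i<n. cofactor M i j * M $$ (i, k)) = 0"
    using cofactor_column_orthogonal[OF M j] by auto
  then have "\<exists>t. \<forall>i\<in>{..<n}. cofactor M i j = t * lam i"
    by (rule simplex_dependencyD(3)[OF dep])
  then obtain t where t: "\<forall>i<n. cofactor M i j = t * lam i"
    by auto
  have "det M = (\<Sum>i<n. M $$ (i, j) * cofactor M i j)"
    by (rule laplace_expansion_column[OF M j])
  also have "\<dots> = t * (\<Sum>i<n. lam i * M $$ (i, j))"
    using t by (simp add: sum_distrib_left ac_simps)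
  also have "t = cofactor M 0 j / lam 0"
    using t j pos by auto
  finally show ?thesis
    unfolding cofactor_def by simp
qed

section \<open>Sine vectors of three-element chains\<close>

lemma sin_deg_diff: "sin_deg (x - y) = sin (x * pi / 180 - y * pi / 180)"
  unfolding sin_deg_def by (simp add: left_diff_distrib diff_divide_distrib)

text \<open>The vector \<open>\<widehat>c\<close> of the circuit \<open>c = ({e\<^sub>1, e\<^sub>3}, {e\<^sub>2})\<close> when
  \<open>e\<^sub>1 \<prec> e\<^sub>2 \<prec> e\<^sub>3\<close>; see \<open>shat_chain\<close>.\<close>
definition circuit_vec :: "('e \<Rightarrow> real) \<Rightarrow> 'e \<Rightarrow> 'e \<Rightarrow> 'e \<Rightarrow> 'e \<Rightarrow> real" where
  "circuit_vec \<theta> e1 e2 e3 e =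
     (if e = e1 then sin_deg (\<theta> e3 - \<theta> e2)
      else if e = e2 then - sin_deg (\<theta> e3 - \<theta> e1)
      else if e = e3 then sin_deg (\<theta> e2 - \<theta> e1) else 0)"

lemma dotE_supported:
  assumes "finite E" "S \<subseteq> E" "\<forall>e\<in>E - S. u e = 0"
  shows "dotE E u r = dotE S u r"
  unfolding dotE_def using assms by (intro sum.mono_neutral_right) auto

lemma dotE_three:
  assumes "distinct [e1, e2, e3]"
  shows "dotE {e1, e2, e3} u r = u e1 * r e1 + u e2 * r e2 + u e3 * r e3"
  using assms by (simp add: dotE_def)

lemma circuit_vec_orthogonal:
  assumes E: "finite E" "{e1, e2, e3} \<subseteq> E" and d: "distinct [e1, e2, e3]"
  shows "dotE E (circuit_vec \<theta> e1 e2 e3) (\<lambda>e. cos (\<theta> e * pi / 180)) = 0"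
    and "dotE E (circuit_vec \<theta> e1 e2 e3) (\<lambda>e. sin (\<theta> e * pi / 180)) = 0"
proof -
  have supp: "\<forall>e\<in>E - {e1, e2, e3}. circuit_vec \<theta> e1 e2 e3 e = 0"
    by (simp add: circuit_vec_def)
  have val: "circuit_vec \<theta> e1 e2 e3 e1 = sin_deg (\<theta> e3 - \<theta> e2)"
    "circuit_vec \<theta> e1 e2 e3 e2 = - sin_deg (\<theta> e3 - \<theta> e1)"
    "circuit_vec \<theta> e1 e2 e3 e3 = sin_deg (\<theta> e2 - \<theta> e1)"
    using d by (auto simp: circuit_vec_def)
  show "dotE E (circuit_vec \<theta> e1 e2 e3) (\<lambda>e. cos (\<theta> e * pi / 180)) = 0"
    and "dotE E (circuit_vec \<theta> e1 e2 e3) (\<lambda>e. sin (\<theta> e * pi / 180)) = 0"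
    unfolding dotE_supported[OF E supp] dotE_three[OF d] val
    by (simp_all add: sin_deg_diff sin_diff cos_diff algebra_simps)
qed

lemma cos_sin_orthogonal_three_points_eq_zero:
  fixes u \<phi> :: "'e \<Rightarrow> real"
  assumes E: "finite E" "{x1, x2, x3} \<subseteq> E" and d: "distinct [x1, x2, x3]"
    and supp: "\<forall>e\<in>E - {x1, x2, x3}. u e = 0" and u1: "u x1 = 0"
    and cos: "dotE E u (\<lambda>e. cos (\<phi> e)) = 0" and sin: "dotE E u (\<lambda>e. sin (\<phi> e)) = 0"
    and nz: "sin (\<phi> x3 - \<phi> x2) \<noteq> 0"
  shows "\<forall>e\<in>E. u e = 0"
proof -
  have c: "u x2 * cos (\<phi> x2) + u x3 * cos (\<phi> x3) = 0"
    using cos u1 unfolding dotE_supported[OF E supp] dotE_three[OF d] by simp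
  have s: "u x2 * sin (\<phi> x2) + u x3 * sin (\<phi> x3) = 0"
    using sin u1 unfolding dotE_supported[OF E supp] dotE_three[OF d] by simp
  have "u x2 * sin (\<phi> x3 - \<phi> x2) = sin (\<phi> x3) * (u x2 * cos (\<phi> x2) + u x3 * cos (\<phi> x3))
      - cos (\<phi> x3) * (u x2 * sin (\<phi> x2) + u x3 * sin (\<phi> x3))"
    by (simp add: sin_diff algebra_simps)
  then have 2: "u x2 = 0"
    using c s nz by simp
  have "u x3 * sin (\<phi> x3 - \<phi> x2) = cos (\<phi> x2) * (u x2 * sin (\<phi> x2) + u x3 * sin (\<phi> x3))
      - sin (\<phi> x2) * (u x2 * cos (\<phi> x2) + u x3 * cos (\<phi> x3))"
    by (simp add: sin_diff algebra_simps)
  then have 3: "u x3 = 0"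
    using c s nz by simp
  show ?thesis
    using supp u1 2 3 by auto
qed

section \<open>Circuits of a partial order\<close>

text \<open>Rank by the number of predecessors, breaking ties by an arbitrary injection into \<open>nat\<close>.\<close>
lemma total_ext_exists:
  assumes fin: "finite E" and po: "strict_partial_order_on E prec"
  shows "\<exists>lt. total_ext E prec lt"
proof -
  obtain g :: "'a \<Rightarrow> nat" where g: "inj_on g E"
    using finite_imp_inj_to_nat_seg[OF fin] by blast
  define h where "h e = card {x\<in>E. prec x e}" for e
  define lt where "lt e f \<longleftrightarrow> h e < h f \<or> (h e = h f \<and> g e < g f)" for e f
  have h_mono: "h e < h f" if ef: "e \<in> E" "f \<in> E" "prec e f" for e f
  proof -
    have "{x\<in>E. prec x e} \<subset> {x\<in>E. prec x f}"
      using po ef unfolding strict_partial_order_on_def by blast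
    then show ?thesis
      unfolding h_def using fin by (intro psubset_card_mono) auto
  qed
  have "total_ext E prec lt"
    unfolding total_ext_def strict_total_order_on_def strict_partial_order_on_def
  proof (intro conjI ballI impI)
    fix e f assume "e \<in> E" "f \<in> E" "e \<noteq> f"
    then have "g e \<noteq> g f"
      using g unfolding inj_on_def by blast
    then show "lt e f \<or> lt f e"
      unfolding lt_def by auto
  qed (auto simp: lt_def h_mono)
  then show ?thesis by blast
qed

definition chain_circuit :: "'e set \<Rightarrow> ('e \<Rightarrow> 'e \<Rightarrow> bool) \<Rightarrow> 'e sset \<Rightarrow> bool" where
  "chain_circuit E prec a \<longleftrightarrow> (\<exists>e1\<in>E. \<exists>e2\<in>E. \<exists>e3\<in>E. prec e1 e2 \<and> prec e2 e3 \<and>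
     (a = ({e1, e3}, {e2}) \<or> a = ({e2}, {e1, e3})))"

text \<open>It suffices to look at one linear extension: on a \<open>prec\<close>-chain it agrees with \<open>prec\<close>.\<close>
lemma chain_circuit_if_circuits_po:
  assumes fin: "finite E" and po: "strict_partial_order_on E prec"
    and a: "a \<in> circuits_po E prec"
    and chain: "\<forall>e\<in>supp a. \<forall>f\<in>supp a. e \<noteq> f \<longrightarrow> prec e f \<or> prec f e"
  shows "chain_circuit E prec a"
proof -
  obtain lt where lt: "total_ext E prec lt"
    using total_ext_exists[OF fin po] by blast
  then have "a \<in> circuits_tot E lt"
    using a unfolding circuits_po_def by blast
  then obtain e1 e2 e3 where es: "e1 \<in> E" "e2 \<in> E" "e3 \<in> E" and l: "lt e1 e2" "lt e2 e3"
    and a_eq: "a = ({e1, e3}, {e2}) \<or> a = ({e2}, {e1, e3})"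
    unfolding circuits_tot_def by blast
  have irr: "\<And>e. e \<in> E \<Longrightarrow> \<not> lt e e"
    and trans: "\<And>e f k. e \<in> E \<Longrightarrow> f \<in> E \<Longrightarrow> k \<in> E \<Longrightarrow> lt e f \<Longrightarrow> lt f k \<Longrightarrow> lt e k"
    and ext: "\<And>e f. e \<in> E \<Longrightarrow> f \<in> E \<Longrightarrow> prec e f \<Longrightarrow> lt e f"
    using lt unfolding total_ext_def strict_total_order_on_def strict_partial_order_on_def
    by blast+
  have "supp a = {e1, e2, e3}"
    using a_eq unfolding supp_def by auto
  then have "prec e1 e2 \<or> prec e2 e1" "prec e2 e3 \<or> prec e3 e2"
    using chain l irr es by auto
  moreover have "\<not> prec e2 e1" "\<not> prec e3 e2"
    using ext trans irr es l by blast+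
  ultimately show ?thesis
    unfolding chain_circuit_def using es a_eq by blast
qed

lemma THE_oriented_pair:
  assumes d: "distinct [e, b, c]" and X: "X = {e, b, c}" and r: "r b c" "\<not> r c b"
  shows "(THE s. \<exists>e' e''. X = {e, e', e''} \<and> e' \<noteq> e \<and> e'' \<noteq> e \<and> r e' e'' \<and> s = g e' e'')
    = g b c"
proof (rule the_equality)
  show "\<exists>e' e''. X = {e, e', e''} \<and> e' \<noteq> e \<and> e'' \<noteq> e \<and> r e' e'' \<and> g b c = g e' e''"
    by (rule exI[of _ b], rule exI[of _ c]) (use d X r(1) in auto)
next
  fix s assume "\<exists>e' e''. X = {e, e', e''} \<and> e' \<noteq> e \<and> e'' \<noteq> e \<and> r e' e'' \<and> s = g e' e''"
  then obtain e' e'' where X': "{e, e', e''} = {e, b, c}"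
    and e': "e' \<noteq> e" "e'' \<noteq> e" and r': "r e' e''" and s: "s = g e' e''"
    using X by blast
  have "{e', e''} = {e, e', e''} - {e}"
    using e' by blast
  also have "\<dots> = {b, c}"
    using d unfolding X' by auto
  finally have "e' = b \<and> e'' = c"
    using r r' by (auto simp: doubleton_eq_iff)
  then show "s = g b c"
    using s by simp
qed

lemma strict_partial_order_chain:
  assumes po: "strict_partial_order_on E prec" and es: "e1 \<in> E" "e2 \<in> E" "e3 \<in> E"
    and p: "prec e1 e2" "prec e2 e3"
  shows "prec e1 e3" "distinct [e1, e2, e3]" "\<not> prec e2 e1" "\<not> prec e3 e2" "\<not> prec e3 e1"
proof -
  have irr: "\<And>e. e \<in> E \<Longrightarrow> \<not> prec e e"
    and trans: "\<And>e f k. e \<in> E \<Longrightarrow> f \<in> E \<Longrightarrow> k \<in> E \<Longrightarrow> prec e f \<Longrightarrow> prec f k \<Longrightarrow> prec e k"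
    using po unfolding strict_partial_order_on_def by blast+
  show p13: "prec e1 e3"
    using trans es p by blast
  show "distinct [e1, e2, e3]"
    using irr es p p13 by auto
  show "\<not> prec e2 e1" "\<not> prec e3 e2" "\<not> prec e3 e1"
    using irr trans es p p13 by blast+
qed

lemma shat_at_oriented_pair:
  assumes X: "supp c = {e, b, d}" and dist: "distinct [e, b, d]" and r: "prec b d" "\<not> prec d b"
  shows "shat prec \<theta> c e = sval c e * sin_deg (\<theta> d - \<theta> b)"
proof -
  have "e \<in> supp c"
    using X by simp
  then have "shat prec \<theta> c e = sval c e * (THE s. \<exists>e' e''. supp c = {e, e', e''} \<and>
      e' \<noteq> e \<and> e'' \<noteq> e \<and> prec e' e'' \<and> s = sin_deg (\<theta> e'' - \<theta> e'))"
    by (simp only: shat_def if_True)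
  also have "(THE s. \<exists>e' e''. supp c = {e, e', e''} \<and>
      e' \<noteq> e \<and> e'' \<noteq> e \<and> prec e' e'' \<and> s = sin_deg (\<theta> e'' - \<theta> e')) = sin_deg (\<theta> d - \<theta> b)"
    by (rule THE_oriented_pair[where g = "\<lambda>e' e''. sin_deg (\<theta> e'' - \<theta> e')", OF dist X r])
  finally show ?thesis .
qed

lemma shat_chain:
  assumes po: "strict_partial_order_on E prec" and es: "e1 \<in> E" "e2 \<in> E" "e3 \<in> E"
    and p: "prec e1 e2" "prec e2 e3"
  shows "shat prec \<theta> ({e1, e3}, {e2}) = circuit_vec \<theta> e1 e2 e3"
    and "shat prec \<theta> ({e2}, {e1, e3}) = (\<lambda>e. - circuit_vec \<theta> e1 e2 e3 e)"
proof -
  note chain = strict_partial_order_chain[OF po es p]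
  have p13: "prec e1 e3" and n: "\<not> prec e2 e1" "\<not> prec e3 e2" "\<not> prec e3 e1"
    using chain by simp_all
  have d: "e1 \<noteq> e2" "e2 \<noteq> e3" "e1 \<noteq> e3"
    using chain(2) by auto
  have at: "shat prec \<theta> c e1 = sval c e1 * sin_deg (\<theta> e3 - \<theta> e2)"
    "shat prec \<theta> c e2 = sval c e2 * sin_deg (\<theta> e3 - \<theta> e1)"
    "shat prec \<theta> c e3 = sval c e3 * sin_deg (\<theta> e2 - \<theta> e1)"
    "\<And>e. e \<notin> {e1, e2, e3} \<Longrightarrow> shat prec \<theta> c e = 0"
    if c: "supp c = {e1, e2, e3}" for c
  proof -
    have c2: "supp c = {e2, e1, e3}" and c3: "supp c = {e3, e1, e2}"
      using c by auto
    show "shat prec \<theta> c e1 = sval c e1 * sin_deg (\<theta> e3 - \<theta> e2)"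
      using d p n by (intro shat_at_oriented_pair[OF c]) auto
    show "shat prec \<theta> c e2 = sval c e2 * sin_deg (\<theta> e3 - \<theta> e1)"
      using d p13 n by (intro shat_at_oriented_pair[OF c2]) auto
    show "shat prec \<theta> c e3 = sval c e3 * sin_deg (\<theta> e2 - \<theta> e1)"
      using d p n by (intro shat_at_oriented_pair[OF c3]) auto
    show "\<And>e. e \<notin> {e1, e2, e3} \<Longrightarrow> shat prec \<theta> c e = 0"
      using c by (simp add: shat_def)
  qed
  have supp: "supp ({e1, e3}, {e2}) = {e1, e2, e3}" "supp ({e2}, {e1, e3}) = {e1, e2, e3}"
    unfolding supp_def by auto
  show "shat prec \<theta> ({e1, e3}, {e2}) = circuit_vec \<theta> e1 e2 e3"
  proof
    fix e
    show "shat prec \<theta> ({e1, e3}, {e2}) e = circuit_vec \<theta> e1 e2 e3 e"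
      using at[OF supp(1)] d
      by (cases "e = e1"; cases "e = e2"; cases "e = e3") (auto simp: circuit_vec_def sval_def)
  qed
  show "shat prec \<theta> ({e2}, {e1, e3}) = (\<lambda>e. - circuit_vec \<theta> e1 e2 e3 e)"
  proof
    fix e
    show "shat prec \<theta> ({e2}, {e1, e3}) e = - circuit_vec \<theta> e1 e2 e3 e"
      using at[OF supp(2)] d
      by (cases "e = e1"; cases "e = e2"; cases "e = e3") (auto simp: circuit_vec_def sval_def)
  qed
qed

lemma chain_circuit_shat:
  assumes po: "strict_partial_order_on E prec" and a: "chain_circuit E prec a"
  obtains e1 e2 e3 and \<kappa> :: real
  where "{e1, e2, e3} \<subseteq> E" "distinct [e1, e2, e3]"
    "\<And>\<theta>. shat prec \<theta> a = (\<lambda>e. \<kappa> * circuit_vec \<theta> e1 e2 e3 e)"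
proof -
  obtain e1 e2 e3 where es: "e1 \<in> E" "e2 \<in> E" "e3 \<in> E" and p: "prec e1 e2" "prec e2 e3"
    and a_eq: "a = ({e1, e3}, {e2}) \<or> a = ({e2}, {e1, e3})"
    using a unfolding chain_circuit_def by blast
  have "distinct [e1, e2, e3]"
    by (rule strict_partial_order_chain(2)[OF po es p])
  moreover have "{e1, e2, e3} \<subseteq> E"
    using es by simp
  ultimately show thesis
    using a_eq that[of e1 e2 e3 1] that[of e1 e2 e3 "-1"] shat_chain[OF po es p] by auto
qed

lemma shat_chain_orthogonal:
  assumes fin: "finite E" and po: "strict_partial_order_on E prec" and a: "chain_circuit E prec a"
  shows "dotE E (shat prec \<theta> a) (\<lambda>e. cos (\<theta> e * pi / 180)) = 0"
    and "dotE E (shat prec \<theta> a) (\<lambda>e. sin (\<theta> e * pi / 180)) = 0"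
proof -
  obtain e1 e2 e3 \<kappa> where E: "{e1, e2, e3} \<subseteq> E" and d: "distinct [e1, e2, e3]"
    and a_eq: "\<And>\<theta>. shat prec \<theta> a = (\<lambda>e. \<kappa> * circuit_vec \<theta> e1 e2 e3 e)"
    using chain_circuit_shat[OF po a] by blast
  have scale: "dotE E (\<lambda>e. \<kappa> * u e) r = \<kappa> * dotE E u r" for u r
    unfolding dotE_def by (simp add: sum_distrib_left mult.assoc)
  show "dotE E (shat prec \<theta> a) (\<lambda>e. cos (\<theta> e * pi / 180)) = 0"
    and "dotE E (shat prec \<theta> a) (\<lambda>e. sin (\<theta> e * pi / 180)) = 0"
    unfolding a_eq scale using circuit_vec_orthogonal[OF fin E d] by simp_all
qed

section \<open>Continuity in \<open>\<theta>\<close>\<close>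

lemma continuous_on_circuit_vec:
  fixes \<theta>f :: "real \<Rightarrow> 'e \<Rightarrow> real"
  assumes cont: "\<And>e. continuous_on S (\<lambda>s. \<theta>f s e)"
  shows "continuous_on S (\<lambda>s. circuit_vec (\<theta>f s) e1 e2 e3 e)"
proof -
  have sin_cont: "continuous_on S (\<lambda>s. sin_deg (\<theta>f s x - \<theta>f s y))" for x y
    unfolding sin_deg_def using cont[of x] cont[of y] by (auto intro!: continuous_intros)
  have neg_sin_cont: "continuous_on S (\<lambda>s. - sin_deg (\<theta>f s x - \<theta>f s y))" for x y
    using continuous_on_minus[OF sin_cont] .
  consider "e = e1" | "e \<noteq> e1" "e = e2" | "e \<noteq> e1" "e \<noteq> e2" "e = e3"
    | "e \<noteq> e1" "e \<noteq> e2" "e \<noteq> e3"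
    by blast
  then show ?thesis
  proof cases
    case 1
    then show ?thesis by (simp add: circuit_vec_def sin_cont)
  next
    case 2
    then show ?thesis by (simp add: circuit_vec_def neg_sin_cont)
  next
    case 3
    then show ?thesis by (simp add: circuit_vec_def sin_cont)
  qed (simp add: circuit_vec_def)
qed

lemma continuous_on_shat_chain:
  fixes \<theta>f :: "real \<Rightarrow> 'e \<Rightarrow> real"
  assumes po: "strict_partial_order_on E prec" and a: "chain_circuit E prec a"
    and cont: "\<And>e. continuous_on S (\<lambda>s. \<theta>f s e)"
  shows "continuous_on S (\<lambda>s. shat prec (\<theta>f s) a e)"
proof -
  obtain e1 e2 e3 \<kappa> where "{e1, e2, e3} \<subseteq> E" "distinct [e1, e2, e3]"
    and a_eq: "\<And>\<theta>. shat prec \<theta> a = (\<lambda>e. \<kappa> * circuit_vec \<theta> e1 e2 e3 e)"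
    using chain_circuit_shat[OF po a] by blast
  show ?thesis
    unfolding a_eq by (intro continuous_on_mult_left continuous_on_circuit_vec cont)
qed

lemma convex_comb_strict_mono:
  fixes s a b c d :: real
  assumes s: "0 \<le> s" "s \<le> 1" and "a < c" "b < d"
  shows "(1 - s) * a + s * b < (1 - s) * c + s * d"
proof (cases "s = 1")
  case False
  with assms have "(1 - s) * a < (1 - s) * c" "s * b \<le> s * d"
    by (simp_all add: mult_left_mono)
  then show ?thesis by simp
qed (use assms in simp)

lemma respects_po_segment:
  assumes \<theta>0: "respects_po E prec \<theta>0" and \<theta>1: "respects_po E prec \<theta>1" and s: "0 \<le> s" "s \<le> 1"
  shows "respects_po E prec (\<lambda>e. (1 - s) * \<theta>0 e + s * \<theta>1 e)"
  unfolding respects_po_def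
proof (intro conjI ballI impI)
  fix e assume e: "e \<in> E"
  show "0 < (1 - s) * \<theta>0 e + s * \<theta>1 e"
    using convex_comb_strict_mono[OF s, of 0 "\<theta>0 e" 0 "\<theta>1 e"] \<theta>0 \<theta>1 e
    unfolding respects_po_def by simp
  show "(1 - s) * \<theta>0 e + s * \<theta>1 e < 180"
    using convex_comb_strict_mono[OF s, of "\<theta>0 e" 180 "\<theta>1 e" 180] \<theta>0 \<theta>1 e
    unfolding respects_po_def by (simp add: algebra_simps)
next
  fix e f assume "e \<in> E" "f \<in> E" "prec e f"
  then show "(1 - s) * \<theta>0 e + s * \<theta>1 e < (1 - s) * \<theta>0 f + s * \<theta>1 f"
    using convex_comb_strict_mono[OF s] \<theta>0 \<theta>1 unfolding respects_po_def by blast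
qed

lemma sgn_eq_if_continuous_nonzero:
  fixes h :: "real \<Rightarrow> real"
  assumes ab: "a \<le> b" and cont: "continuous_on {a..b} h" and nz: "\<forall>s\<in>{a..b}. h s \<noteq> 0"
  shows "sgn (h a) = sgn (h b)"
proof (rule ccontr)
  assume ne: "sgn (h a) \<noteq> sgn (h b)"
  have "h a \<noteq> 0" "h b \<noteq> 0"
    using nz ab by auto
  with ne have "h a < 0 \<and> 0 < h b \<or> h b < 0 \<and> 0 < h a"
    by (auto simp: sgn_if split: if_splits)
  then have "\<exists>s\<ge>a. s \<le> b \<and> h s = 0"
    using IVT'[OF _ _ ab cont] IVT2'[OF _ _ ab cont] by force
  then show False
    using nz by auto
qed

lemma continuous_on_det:
  assumes "\<And>i k. i < n \<Longrightarrow> k < n \<Longrightarrow> continuous_on S (\<lambda>s. f s (i, k))"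
  shows "continuous_on S (\<lambda>s. det (mat n n (f s)) :: real)"
proof -
  have "det (mat n n (f s)) = (\<Sum>p\<in>{p. p permutes {0..<n}}. signof p * (\<Prod>i=0..<n. f s (i, p i)))"
    for s
    by (subst det_def') (auto intro!: sum.cong prod.cong simp: permutes_in_image)
  then show ?thesis
    by (simp only:) (intro continuous_intros assms, auto simp: permutes_in_image)
qed

lemma mat_delete_mat_first_row:
  "mat_delete (mat nr nc f) 0 j =
     mat (nr - 1) (nc - 1) (\<lambda>(i, k). f (Suc i, if k < j then k else Suc k))"
  unfolding mat_delete_def by (rule cong_mat) auto

section \<open>Solubility and the sign of the determinant\<close>

lemma sgn_eq_unit_iff:
  fixes x \<kappa> :: real
  assumes "\<kappa> = 1 \<or> \<kappa> = -1"
  shows "sgn x = \<kappa> \<longleftrightarrow> \<kappa> * x > 0"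
  using assms by (auto simp: sgn_if zero_less_mult_iff)

lemma pos_mult_same_sign:
  fixes x y z :: real
  assumes "x * z > 0" "y * z > 0"
  shows "x * y > 0"
  using assms by (auto simp: zero_less_mult_iff)

text \<open>Of the twisted-graph structure the argument only uses that every row is a circuit on a
  \<open>prec\<close>-chain.\<close>
locale simplicial_triple =
  fixes Ed :: "'e set" and prec :: "'e \<Rightarrow> 'e \<Rightarrow> bool" and A :: "'e sset set"
    and F :: "'e set" and x1 x2 x3 :: 'e and rs :: "'e sset list" and cs :: "'e list"
  assumes finite_Ed: "finite Ed"
    and po: "strict_partial_order_on Ed prec"
    and chain: "\<And>a. a \<in> A \<Longrightarrow> chain_circuit Ed prec a"
    and simplicial: "simplicial_on Ed prec A F"
    and Ed_eq: "Ed = F \<union> {x1, x2, x3}" and F_disjoint: "F \<inter> {x1, x2, x3} = {}"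
    and x12: "prec x1 x2" and x23: "prec x2 x3"
    and rows: "distinct rs" "set rs = A"
    and cols: "distinct cs" "set cs = Ed"
begin

definition sq_cols :: "'e list" where
  "sq_cols = filter (\<lambda>e. e \<in> F \<union> {x1}) cs"

definition jx1 :: nat where
  "jx1 = (THE k. k < length sq_cols \<and> sq_cols ! k = x1)"

definition sq_mat :: "('e \<Rightarrow> real) \<Rightarrow> real mat" where
  "sq_mat \<theta> = sigma_sub prec \<theta> rs cs (F \<union> {x1})"

definition minor :: "('e \<Rightarrow> real) \<Rightarrow> real" where
  "minor \<theta> = det (mat_delete (sq_mat \<theta>) 0 jx1)"

definition soluble :: "('e \<Rightarrow> real) \<Rightarrow> 'e sset \<Rightarrow> bool" where
  "soluble \<theta> C \<longleftrightarrow>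
     (\<exists>r. (\<forall>a\<in>A. dotE Ed (shat prec \<theta> a) r > 0) \<and> dotE Ed (shat prec \<theta> C) r > 0)"

definition row_comb :: "('e sset \<Rightarrow> real) \<Rightarrow> ('e \<Rightarrow> real) \<Rightarrow> 'e \<Rightarrow> real" where
  "row_comb lam \<theta> e = (\<Sum>a\<in>A. lam a * shat prec \<theta> a e)"

lemma x_in_Ed: "x1 \<in> Ed" "x2 \<in> Ed" "x3 \<in> Ed"
  using Ed_eq by auto

lemma x_chain: "prec x1 x3" "distinct [x1, x2, x3]"
  using strict_partial_order_chain[OF po x_in_Ed x12 x23] by auto

lemma set_sq_cols: "set sq_cols = F \<union> {x1}"
  using cols Ed_eq unfolding sq_cols_def by auto

lemma distinct_sq_cols: "distinct sq_cols"
  using cols unfolding sq_cols_def by simp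

lemma length_sq_cols: "length sq_cols = card F + 1"
proof -
  have "finite F" "x1 \<notin> F"
    using finite_Ed Ed_eq F_disjoint by auto
  then show ?thesis
    using distinct_card[OF distinct_sq_cols] set_sq_cols by simp
qed

lemma jx1: "jx1 < length sq_cols" "sq_cols ! jx1 = x1"
proof -
  have "\<exists>!k. k < length sq_cols \<and> sq_cols ! k = x1"
    using distinct_Ex1[OF distinct_sq_cols] set_sq_cols by simp
  then have "jx1 < length sq_cols \<and> sq_cols ! jx1 = x1"
    unfolding jx1_def by (rule theI')
  then show "jx1 < length sq_cols" "sq_cols ! jx1 = x1"
    by auto
qed

lemma bij_sq_cols: "bij_betw ((!) sq_cols) {..<length sq_cols} (F \<union> {x1})"
  using bij_betw_nth[OF distinct_sq_cols refl] set_sq_cols by simp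

lemma bij_sq_cols_F: "bij_betw ((!) sq_cols) ({..<length sq_cols} - {jx1}) F"
proof -
  have "bij_betw ((!) sq_cols) {jx1} {x1}"
    using jx1 by simp
  then have "bij_betw ((!) sq_cols) ({..<length sq_cols} - {jx1}) (F \<union> {x1} - {x1})"
    using jx1 by (intro bij_betw_DiffI[OF bij_sq_cols]) auto
  moreover have "F \<union> {x1} - {x1} = F"
    using F_disjoint by auto
  ultimately show ?thesis by simp
qed

lemma bij_rows: "bij_betw ((!) rs) {..<length rs} A"
  using bij_betw_nth[OF rows(1) refl] rows(2) by simp

lemma sum_rows: "(\<Sum>a\<in>A. g a) = (\<Sum>i<length rs. g (rs ! i))"
  by (simp add: sum.reindex_bij_betw[OF bij_rows])

lemma sq_mat_eq:
  "sq_mat \<theta> = mat (length rs) (length sq_cols) (\<lambda>(i, k). shat prec \<theta> (rs ! i) (sq_cols ! k))"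
  unfolding sq_mat_def sigma_sub_def sq_cols_def Let_def by simp

lemma sq_mat_index:
  "i < length rs \<Longrightarrow> k < length sq_cols \<Longrightarrow> sq_mat \<theta> $$ (i, k) = shat prec \<theta> (rs ! i) (sq_cols ! k)"
  by (simp add: sq_mat_eq)

lemma row_comb_F: "simplex_dependency A F (shat prec \<theta>) lam \<Longrightarrow> e \<in> F \<Longrightarrow> row_comb lam \<theta> e = 0"
  unfolding row_comb_def by (rule simplex_dependencyD(2))

lemma dotE_row_comb:
  "dotE Ed (row_comb lam \<theta>) r = (\<Sum>a\<in>A. lam a * dotE Ed (shat prec \<theta> a) r)"
  unfolding dotE_def row_comb_def
  by (simp add: sum_distrib_left sum_distrib_right mult.assoc sum.swap[of _ Ed])

lemma row_comb_orthogonal: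
  shows "dotE Ed (row_comb lam \<theta>) (\<lambda>e. cos (\<theta> e * pi / 180)) = 0"
    and "dotE Ed (row_comb lam \<theta>) (\<lambda>e. sin (\<theta> e * pi / 180)) = 0"
  unfolding dotE_row_comb using shat_chain_orthogonal[OF finite_Ed po chain] by simp_all

lemma dotE_supported_x1:
  assumes "\<forall>e\<in>F. g e = 0" and "\<forall>e. e \<notin> F \<union> {x1} \<longrightarrow> r e = 0"
  shows "dotE Ed g r = g x1 * r x1"
proof -
  have "dotE Ed g r = (\<Sum>e\<in>{x1}. g e * r e)"
    unfolding dotE_def using assms finite_Ed x_in_Ed by (intro sum.mono_neutral_right) auto
  then show ?thesis by simp
qed

lemma circuit_vec_F: "e \<in> F \<Longrightarrow> circuit_vec \<theta> x1 x2 x3 e = 0"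
  using F_disjoint by (auto simp: circuit_vec_def)

context
  fixes \<theta> :: "'e \<Rightarrow> real"
  assumes respects: "respects_po Ed prec \<theta>"
begin

lemma ex_dependency: "\<exists>lam. simplex_dependency A F (shat prec \<theta>) lam"
  and card_A: "card A = card F + 1"
  using simplicial respects unfolding simplicial_on_def is_simplex_iff_dependency by blast+

lemma length_rs: "length rs = length sq_cols"
  using distinct_card[OF rows(1)] rows(2) card_A length_sq_cols by simp

lemma sin_deg_x23_pos: "sin_deg (\<theta> x3 - \<theta> x2) > 0"
proof -
  have "0 < \<theta> x2" "\<theta> x3 < 180" "\<theta> x2 < \<theta> x3"
    using respects x_in_Ed x23 unfolding respects_po_def by auto
  then have "0 < (\<theta> x3 - \<theta> x2) * pi / 180" "(\<theta> x3 - \<theta> x2) * pi / 180 < pi"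
    by (simp_all add: divide_less_eq)
  then show ?thesis
    unfolding sin_deg_def by (rule sin_gt_zero)
qed

context
  fixes lam :: "'e sset \<Rightarrow> real"
  assumes dep: "simplex_dependency A F (shat prec \<theta>) lam"
begin

lemma sq_mat_carrier: "sq_mat \<theta> \<in> carrier_mat (length rs) (length rs)"
  unfolding sq_mat_eq length_rs by simp

lemma sq_mat_dependency:
  "simplex_dependency {..<length rs} ({..<length rs} - {jx1}) (\<lambda>i k. sq_mat \<theta> $$ (i, k))
     (lam \<circ> (!) rs)"
proof -
  have "bij_betw ((!) sq_cols) ({..<length rs} - {jx1}) F"
    using bij_sq_cols_F length_rs by simp
  then show ?thesis
    by (rule simplex_dependency_reindex[OF bij_rows _ _ dep]) (auto simp: sq_mat_eq length_rs)
qed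

lemma lam_first_row_pos: "lam (rs ! 0) > 0"
proof -
  have "0 < length rs"
    using jx1(1) length_rs by linarith
  then have "rs ! 0 \<in> A"
    using rows(2) nth_mem by blast
  then show ?thesis
    by (rule simplex_dependencyD(1)[OF dep])
qed

lemma minor_nonzero_of_dependency: "minor \<theta> \<noteq> 0"
  unfolding minor_def
  using det_delete_first_row_nonzero[OF sq_mat_carrier _ sq_mat_dependency] jx1 length_rs
  by simp

lemma det_sq_mat:
  "det (sq_mat \<theta>) = (-1) ^ jx1 * minor \<theta> * row_comb lam \<theta> x1 / lam (rs ! 0)"
proof -
  have "(\<Sum>i<length rs. (lam \<circ> (!) rs) i * sq_mat \<theta> $$ (i, jx1)) = row_comb lam \<theta> x1"
    unfolding row_comb_def sum_rows using jx1 length_rs by (simp add: sq_mat_eq)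
  then show ?thesis
    using det_eq_minor_times_dependency[OF sq_mat_carrier _ sq_mat_dependency] jx1 length_rs
    unfolding minor_def by simp
qed

lemma row_comb_eq_circuit_vec:
  "e \<in> Ed \<Longrightarrow>
     row_comb lam \<theta> e = row_comb lam \<theta> x1 / sin_deg (\<theta> x3 - \<theta> x2) * circuit_vec \<theta> x1 x2 x3 e"
proof -
  define q where "q = row_comb lam \<theta> x1 / sin_deg (\<theta> x3 - \<theta> x2)"
  define u where "u e = row_comb lam \<theta> e - q * circuit_vec \<theta> x1 x2 x3 e" for e
  have dot_u: "dotE Ed u g = dotE Ed (row_comb lam \<theta>) g - q * dotE Ed (circuit_vec \<theta> x1 x2 x3) g"
    for g
    unfolding u_def dotE_def by (simp add: left_diff_distrib sum_subtractf sum_distrib_left mult.assoc)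
  have "\<forall>e\<in>Ed. u e = 0"
  proof (rule cos_sin_orthogonal_three_points_eq_zero[OF finite_Ed _ x_chain(2)])
    show "{x1, x2, x3} \<subseteq> Ed"
      using x_in_Ed by simp
    show "\<forall>e\<in>Ed - {x1, x2, x3}. u e = 0"
      using row_comb_F[OF dep] Ed_eq by (auto simp: u_def circuit_vec_def)
    show "u x1 = 0"
      using sin_deg_x23_pos by (simp add: u_def q_def circuit_vec_def)
    show "dotE Ed u (\<lambda>e. cos (\<theta> e * pi / 180)) = 0" "dotE Ed u (\<lambda>e. sin (\<theta> e * pi / 180)) = 0"
      unfolding dot_u row_comb_orthogonal
      using circuit_vec_orthogonal[OF finite_Ed _ x_chain(2)] x_in_Ed by simp_all
    show "sin (\<theta> x3 * pi / 180 - \<theta> x2 * pi / 180) \<noteq> 0"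
      using sin_deg_x23_pos by (simp add: sin_deg_diff)
  qed
  then show "e \<in> Ed \<Longrightarrow> row_comb lam \<theta> e = q * circuit_vec \<theta> x1 x2 x3 e"
    by (auto simp: u_def)
qed

lemma ex_vec_rows_one:
  assumes "row_comb lam \<theta> x1 \<noteq> 0"
  shows "\<exists>r. (\<forall>e. e \<notin> F \<union> {x1} \<longrightarrow> r e = 0) \<and> (\<forall>a\<in>A. dotE Ed (shat prec \<theta> a) r = 1)"
proof -
  let ?n = "length rs"
  have "det (sq_mat \<theta>) \<noteq> 0"
    using assms minor_nonzero_of_dependency lam_first_row_pos unfolding det_sq_mat by simp
  then obtain v where v: "\<forall>i<?n. (\<Sum>k<?n. sq_mat \<theta> $$ (i, k) * v k) = 1"
    using ex_solution_if_det_nonzero[OF sq_mat_carrier, where b = "\<lambda>_. 1"] by blast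
  have bij: "bij_betw ((!) sq_cols) {..<?n} (F \<union> {x1})"
    using bij_sq_cols length_rs by simp
  define r where "r e = (if e \<in> F \<union> {x1} then v (inv_into {..<?n} ((!) sq_cols) e) else 0)" for e
  have r_nth: "r (sq_cols ! k) = v k" if "k < ?n" for k
    using bij_betw_apply[OF bij] bij_betw_inv_into_left[OF bij] that by (simp add: r_def)
  have dot_r: "dotE Ed g r = (\<Sum>k<?n. g (sq_cols ! k) * v k)" for g
  proof -
    have "dotE Ed g r = dotE (F \<union> {x1}) g r"
      unfolding dotE_def using Ed_eq
      by (intro sum.mono_neutral_right[OF finite_Ed]) (auto simp: r_def)
    also have "\<dots> = (\<Sum>k<?n. g (sq_cols ! k) * r (sq_cols ! k))"
      unfolding dotE_def by (rule sum.reindex_bij_betw[OF bij, symmetric])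
    also have "\<dots> = (\<Sum>k<?n. g (sq_cols ! k) * v k)"
      by (rule sum.cong[OF refl]) (simp add: r_nth)
    finally show ?thesis .
  qed
  have "dotE Ed (shat prec \<theta> a) r = 1" if "a \<in> A" for a
  proof -
    have "a \<in> set rs"
      using that rows(2) by simp
    then obtain i where i: "i < ?n" "a = rs ! i"
      by (auto simp: in_set_conv_nth)
    have "(\<Sum>k<?n. shat prec \<theta> a (sq_cols ! k) * v k) = (\<Sum>k<?n. sq_mat \<theta> $$ (i, k) * v k)"
      using i length_rs by (intro sum.cong[OF refl]) (simp add: sq_mat_index)
    also have "\<dots> = 1"
      using v i(1) by blast
    finally show ?thesis
      unfolding dot_r .
  qed
  moreover have "\<forall>e. e \<notin> F \<union> {x1} \<longrightarrow> r e = 0"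
    by (simp add: r_def)
  ultimately show ?thesis
    by blast
qed

text \<open>A solution is positive on the positive combination \<open>row_comb\<close> of the rows, which is a
  multiple of \<open>\<widehat>C\<close>.\<close>
lemma soluble_iff_row_comb:
  assumes \<kappa>: "\<kappa> = 1 \<or> \<kappa> = -1" and C: "shat prec \<theta> C = (\<lambda>e. \<kappa> * circuit_vec \<theta> x1 x2 x3 e)"
  shows "soluble \<theta> C \<longleftrightarrow> \<kappa> * row_comb lam \<theta> x1 > 0"
proof -
  let ?w = "row_comb lam \<theta>" and ?cv = "circuit_vec \<theta> x1 x2 x3"
  have A_ne: "A \<noteq> {}" "finite A"
    using card_A rows(2) by auto
  have comb_pos: "dotE Ed ?w r > 0" if "\<forall>a\<in>A. dotE Ed (shat prec \<theta> a) r > 0" for r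
    unfolding dotE_row_comb
    using that simplex_dependencyD(1)[OF dep] by (intro sum_pos A_ne mult_pos_pos) auto
  have dot_C: "dotE Ed (shat prec \<theta> C) r = \<kappa> * dotE Ed ?cv r" for r
    unfolding C dotE_def by (simp add: sum_distrib_left mult.assoc)
  show ?thesis
  proof
    assume "soluble \<theta> C"
    then obtain r where r: "\<forall>a\<in>A. dotE Ed (shat prec \<theta> a) r > 0" "dotE Ed (shat prec \<theta> C) r > 0"
      unfolding soluble_def by blast
    define q where "q = ?w x1 / sin_deg (\<theta> x3 - \<theta> x2)"
    have "\<forall>e\<in>Ed. ?w e = q * ?cv e"
      using row_comb_eq_circuit_vec unfolding q_def by blast
    then have "dotE Ed ?w r = q * dotE Ed ?cv r"
      unfolding dotE_def sum_distrib_left by (intro sum.cong) (auto simp: mult.assoc)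
    then have "q * dotE Ed ?cv r > 0"
      using comb_pos[OF r(1)] by simp
    moreover have "\<kappa> * dotE Ed ?cv r > 0"
      using r(2) dot_C by simp
    ultimately have "q * \<kappa> > 0"
      by (rule pos_mult_same_sign)
    moreover have "\<kappa> * ?w x1 = (q * \<kappa>) * sin_deg (\<theta> x3 - \<theta> x2)"
      using sin_deg_x23_pos unfolding q_def by simp
    ultimately show "\<kappa> * ?w x1 > 0"
      using sin_deg_x23_pos mult_pos_pos by metis
  next
    assume pos: "\<kappa> * ?w x1 > 0"
    then have "?w x1 \<noteq> 0"
      by auto
    then obtain r where r0: "\<forall>e. e \<notin> F \<union> {x1} \<longrightarrow> r e = 0"
      and r1: "\<forall>a\<in>A. dotE Ed (shat prec \<theta> a) r = 1"
      using ex_vec_rows_one by blast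
    have "dotE Ed ?w r > 0"
      using r1 by (intro comb_pos) simp
    moreover have "dotE Ed ?w r = ?w x1 * r x1"
      using row_comb_F[OF dep] by (intro dotE_supported_x1[OF _ r0]) blast
    ultimately have "r x1 * ?w x1 > 0"
      by (simp only: mult.commute)
    with pos have "\<kappa> * r x1 > 0"
      by (rule pos_mult_same_sign)
    moreover have "dotE Ed ?cv r = ?cv x1 * r x1"
      using circuit_vec_F by (intro dotE_supported_x1[OF _ r0]) blast
    then have "dotE Ed (shat prec \<theta> C) r = sin_deg (\<theta> x3 - \<theta> x2) * (\<kappa> * r x1)"
      unfolding dot_C by (simp add: circuit_vec_def)
    ultimately have "dotE Ed (shat prec \<theta> C) r > 0"
      using sin_deg_x23_pos by simp
    then show "soluble \<theta> C"
      unfolding soluble_def using r1 by (intro exI[of _ r] conjI) simp_all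
  qed
qed

lemma soluble_iff_sgn_det:
  assumes \<kappa>: "\<kappa> = 1 \<or> \<kappa> = -1" and C: "shat prec \<theta> C = (\<lambda>e. \<kappa> * circuit_vec \<theta> x1 x2 x3 e)"
  shows "soluble \<theta> C \<longleftrightarrow> sgn (det (sq_mat \<theta>)) = \<kappa> * ((-1) ^ jx1 * sgn (minor \<theta>))"
proof -
  let ?s = "(-1) ^ jx1 * sgn (minor \<theta>) :: real"
  have s: "?s = 1 \<or> ?s = -1"
    using minor_nonzero_of_dependency by (cases "even jx1") (auto simp: sgn_if)
  have "sgn (det (sq_mat \<theta>)) = ?s * sgn (row_comb lam \<theta> x1)"
    using lam_first_row_pos unfolding det_sq_mat by (simp add: sgn_mult sgn_divide)
  also have "\<dots> = \<kappa> * ?s \<longleftrightarrow> sgn (row_comb lam \<theta> x1) = \<kappa>"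
    using s by auto
  finally show ?thesis
    unfolding soluble_iff_row_comb[OF \<kappa> C] sgn_eq_unit_iff[OF \<kappa>] by (simp add: mult.commute)
qed

end

lemma minor_nonzero: "minor \<theta> \<noteq> 0"
  using ex_dependency minor_nonzero_of_dependency by blast

lemma soluble_circuits_iff:
  shows "soluble \<theta> ({x1, x3}, {x2}) \<longleftrightarrow> sgn (det (sq_mat \<theta>)) = (-1) ^ jx1 * sgn (minor \<theta>)"
    and "soluble \<theta> ({x2}, {x1, x3}) \<longleftrightarrow> sgn (det (sq_mat \<theta>)) = - ((-1) ^ jx1 * sgn (minor \<theta>))"
proof -
  obtain lam where dep: "simplex_dependency A F (shat prec \<theta>) lam"
    using ex_dependency by blast
  note shat_C = shat_chain[OF po x_in_Ed x12 x23]
  show "soluble \<theta> ({x1, x3}, {x2}) \<longleftrightarrow> sgn (det (sq_mat \<theta>)) = (-1) ^ jx1 * sgn (minor \<theta>)"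
    using soluble_iff_sgn_det[OF dep, of 1 "({x1, x3}, {x2})"] shat_C(1) by simp
  show "soluble \<theta> ({x2}, {x1, x3}) \<longleftrightarrow> sgn (det (sq_mat \<theta>)) = - ((-1) ^ jx1 * sgn (minor \<theta>))"
    using soluble_iff_sgn_det[OF dep, of "-1" "({x2}, {x1, x3})"] shat_C(2) by simp
qed

end

lemma sgn_minor_eq:
  assumes \<theta>0: "respects_po Ed prec \<theta>0" and \<theta>1: "respects_po Ed prec \<theta>1"
  shows "sgn (minor \<theta>0) = sgn (minor \<theta>1)"
proof -
  define p where "p s = (\<lambda>e. (1 - s) * \<theta>0 e + s * \<theta>1 e)" for s
  have p: "respects_po Ed prec (p s)" if "s \<in> {0..1}" for s
    using respects_po_segment[OF \<theta>0 \<theta>1] that unfolding p_def by simp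
  let ?n = "length rs"
  have n: "length sq_cols = ?n"
    using length_rs[OF \<theta>0] by simp
  have minor_p: "minor (p s) = det (mat (?n - 1) (?n - 1) (\<lambda>(i, k).
      shat prec (p s) (rs ! Suc i) (sq_cols ! (if k < jx1 then k else Suc k))))" for s
    unfolding minor_def sq_mat_eq n mat_delete_mat_first_row by simp
  have "continuous_on {0..1} (\<lambda>s. minor (p s))"
    unfolding minor_p
  proof (rule continuous_on_det)
    fix i k assume "i < ?n - 1" "k < ?n - 1"
    then have "rs ! Suc i \<in> A"
      using rows by auto
    then show "continuous_on {0..1} (\<lambda>s. case (i, k) of (i, k) \<Rightarrow>
        shat prec (p s) (rs ! Suc i) (sq_cols ! (if k < jx1 then k else Suc k)))"
      unfolding p_def by (auto intro!: continuous_on_shat_chain[OF po chain] continuous_intros)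
  qed
  then have "sgn (minor (p 0)) = sgn (minor (p 1))"
    using minor_nonzero p by (intro sgn_eq_if_continuous_nonzero) auto
  then show ?thesis
    unfolding p_def by simp
qed

lemma sign_of_minor_constant:
  obtains \<sigma> :: real
  where "\<sigma> = 1 \<or> \<sigma> = -1" "\<And>\<theta>. respects_po Ed prec \<theta> \<Longrightarrow> (-1) ^ jx1 * sgn (minor \<theta>) = \<sigma>"
proof (cases "\<exists>\<theta>. respects_po Ed prec \<theta>")
  case True
  then obtain \<theta>0 where \<theta>0: "respects_po Ed prec \<theta>0"
    by blast
  show thesis
  proof (rule that)
    show "(-1) ^ jx1 * sgn (minor \<theta>0) = 1 \<or> (-1) ^ jx1 * sgn (minor \<theta>0) = -1"
      using minor_nonzero[OF \<theta>0] by (cases "even jx1") (auto simp: sgn_if)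
    show "(-1) ^ jx1 * sgn (minor \<theta>) = (-1) ^ jx1 * sgn (minor \<theta>0)"
      if "respects_po Ed prec \<theta>" for \<theta>
      using sgn_minor_eq[OF that \<theta>0] by simp
  qed
qed (use that in blast)

end

theorem theoremt:
  fixes V :: "'v set" and Ed :: "('v \<times> 'v) set"
    and prec :: "('v \<times> 'v) \<Rightarrow> ('v \<times> 'v) \<Rightarrow> bool"
    and A :: "('v \<times> 'v) sset set"
    and F :: "('v \<times> 'v) set" and x1 x2 x3 :: "'v \<times> 'v"
    and rs :: "('v \<times> 'v) sset list" and cs :: "('v \<times> 'v) list"
  assumes T: "twisted_graph V Ed prec A"
    and wd: "\<forall>a\<in>A. \<forall>e\<in>supp a. \<forall>f\<in>supp a. e \<noteq> f \<longrightarrow> prec e f \<or> prec f e"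
    and simp: "simplicial_on Ed prec A F"
    and E: "Ed = F \<union> {x1, x2, x3}" "F \<inter> {x1, x2, x3} = {}"
    and x: "prec x1 x2" "prec x2 x3"
    and rows: "distinct rs" "set rs = A"
    and cols: "distinct cs" "set cs = Ed"
  shows "\<exists>\<sigma>::real. \<sigma> \<in> {1, -1} \<and>
     (\<forall>C \<in> {({x1, x3}, {x2}), ({x2}, {x1, x3})}.
        (\<forall>\<theta>. respects_po Ed prec \<theta> \<longrightarrow>
          ((\<exists>r. (\<forall>a\<in>A. dotE Ed (shat prec \<theta> a) r > 0) \<and> dotE Ed (shat prec \<theta> C) r > 0)
           \<longleftrightarrow> sgn (det (sigma_sub prec \<theta> rs cs (F \<union> {x1})))
                 = (if C = ({x1, x3}, {x2}) then \<sigma> else - \<sigma>))))"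
proof -
  have po: "strict_partial_order_on Ed prec" and A_po: "A \<subseteq> circuits_po Ed prec"
    using T unfolding twisted_graph_def by blast+
  have fin: "finite Ed"
    using T unfolding twisted_graph_def digraph_def by (meson finite_SigmaI finite_subset)
  interpret simplicial_triple Ed prec A F x1 x2 x3 rs cs
  proof
    show "chain_circuit Ed prec a" if "a \<in> A" for a
      using chain_circuit_if_circuits_po[OF fin po] A_po wd that by blast
  qed (use fin po simp E x rows cols in auto)
  obtain \<sigma> where \<sigma>: "\<sigma> = 1 \<or> \<sigma> = -1"
    "\<And>\<theta>. respects_po Ed prec \<theta> \<Longrightarrow> (-1) ^ jx1 * sgn (minor \<theta>) = \<sigma>"
    using sign_of_minor_constant by blast
  have "({x2}, {x1, x3}) \<noteq> ({x1, x3}, {x2})"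
    using x_chain(2) by auto
  then show ?thesis
    using \<sigma> soluble_circuits_iff unfolding soluble_def sq_mat_def
    by (intro exI[of _ \<sigma>]) auto
qed

end
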